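(* Let $G$ be a scheduling game on $m$ identical machines of speed $1$ in which every job $i$ has processing-time function $p_i(t)=b_i+at$ with $b_i\ge0$ and a common rate $a>0$, and in which all machines use the SBPT global priority list (non-decreasing order of $b_i$, ties broken arbitrarily). Then every pure Nash equilibrium $\sigma$ of $G$ satisfies $$C_{\max}(\sigma)\le\frac{2m+am-1}{m+a}\cdot OPT(G).$$
   Context: Scheduling game: a finite set $N$ of $n$ jobs (players) and a set $M$ of $m$ machines; machine $j$ has speed $s_j>0$. With a global priority list, all machines share the same bijection $\pi:N\to\{1,\dots,n\}$, and job $u$ has higher priority than $v$ iff $\pi(u)<\pi(v)$. A profile $\sigma\in M^N$ assigns each job to a machine. On machine $j$, the jobs assigned to it, listed in increasing $\pi$-order as $i_1,i_2,\dots$, are processed without idle time: $S_{i_1}(\sigma)=0$, $C_{i_k}(\sigma)=S_{i_k}(\sigma)+p_{i_k}(S_{i_k}(\sigma))/s_j$, $S_{i_{k+1}}(\sigma)=C_{i_k}(\sigma)$. The cost of job $i$ is $C_i(\sigma)$. A pure Nash equilibrium (NE) is a profile in which no job can strictly decrease its completion time by unilaterally changing its machine. Makespan $C_{\max}(\sigma)=\max_iC_i(\sigma)$; $OPT(G)=\min_\sigma C_{\max}(\sigma)$ over all profiles. *)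

theory Defs
  imports Complex_Main "HOL-Library.FuncSet"
begin

text \<open>Jobs form a finite set N (of type 'j), machines a finite set M (of type 'm).
  s j is the speed of machine j, p i t the processing time of job i when started at time t,
  pr is the global priority bijection N -> {1..n} (smaller value = higher priority),
  a profile sig assigns each job a machine.\<close>

definition pred_jobs :: "'j set \<Rightarrow> ('j \<Rightarrow> nat) \<Rightarrow> ('j \<Rightarrow> 'm) \<Rightarrow> 'j \<Rightarrow> 'j set" where
  "pred_jobs N pr sig i = {k \<in> N. sig k = sig i \<and> pr k < pr i}"

definition start_time :: "'j set \<Rightarrow> ('j \<Rightarrow> nat) \<Rightarrow> ('m \<Rightarrow> real) \<Rightarrow> ('j \<Rightarrow> real \<Rightarrow> real)
    \<Rightarrow> ('j \<Rightarrow> 'm) \<Rightarrow> 'j \<Rightarrow> real" where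
  "start_time N pr s p sig i =
     foldl (\<lambda>t k. t + p k t / s (sig i)) 0
       (map (inv_into N pr) (sorted_list_of_set (pr ` pred_jobs N pr sig i)))"

definition compl_time :: "'j set \<Rightarrow> ('j \<Rightarrow> nat) \<Rightarrow> ('m \<Rightarrow> real) \<Rightarrow> ('j \<Rightarrow> real \<Rightarrow> real)
    \<Rightarrow> ('j \<Rightarrow> 'm) \<Rightarrow> 'j \<Rightarrow> real" where
  "compl_time N pr s p sig i =
     start_time N pr s p sig i + p i (start_time N pr s p sig i) / s (sig i)"

definition is_NE :: "'j set \<Rightarrow> 'm set \<Rightarrow> ('j \<Rightarrow> nat) \<Rightarrow> ('m \<Rightarrow> real) \<Rightarrow> ('j \<Rightarrow> real \<Rightarrow> real)
    \<Rightarrow> ('j \<Rightarrow> 'm) \<Rightarrow> bool" where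
  "is_NE N M pr s p sig \<longleftrightarrow> sig \<in> N \<rightarrow> M \<and>
     (\<forall>i\<in>N. \<forall>j\<in>M. compl_time N pr s p sig i \<le> compl_time N pr s p (sig(i := j)) i)"

definition makespan :: "'j set \<Rightarrow> ('j \<Rightarrow> nat) \<Rightarrow> ('m \<Rightarrow> real) \<Rightarrow> ('j \<Rightarrow> real \<Rightarrow> real)
    \<Rightarrow> ('j \<Rightarrow> 'm) \<Rightarrow> real" where
  "makespan N pr s p sig = Max (compl_time N pr s p sig ` N)"

text \<open>Optimum over all profiles (restricted to N, extensional, so the set is finite).\<close>
definition OPT :: "'j set \<Rightarrow> 'm set \<Rightarrow> ('j \<Rightarrow> nat) \<Rightarrow> ('m \<Rightarrow> real) \<Rightarrow> ('j \<Rightarrow> real \<Rightarrow> real) \<Rightarrow> real" where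
  "OPT N M pr s p = Min (makespan N pr s p ` (N \<rightarrow>\<^sub>E M))"

definition SBPT :: "'j set \<Rightarrow> ('j \<Rightarrow> real) \<Rightarrow> ('j \<Rightarrow> nat) \<Rightarrow> bool" where
  "SBPT N b pr \<longleftrightarrow> bij_betw pr N {1..card N} \<and>
     (\<forall>u\<in>N. \<forall>v\<in>N. pr u < pr v \<longrightarrow> b u \<le> b v)"

end

theory Submission
  imports Defs
begin

text \<open>
  On a unit-speed machine a job with processing time \<open>b + a t\<close> started at time \<open>t\<close> completes at
  \<open>(1 + a) t + b\<close>, so every job acts on the load of its machine by \<open>L \<mapsto> (1 + a) L + b\<close>.
  A job is delayed only by jobs of higher priority, hence a Nash equilibrium is a list schedule:
  in SBPT order, every job joins a currently least loaded machine.

  Let the makespan be attained by the \<open>P\<close>-th job, started at load \<open>\<mu>\<close>. Compare total loads with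
  round-robin schedules. For the greedy schedule of the first \<open>P - 1\<close> jobs, total load plus \<open>a\<close>
  times the minimal load \<open>\<mu>\<close> is at most the round-robin value of these jobs followed by a job with
  \<open>b = 0\<close>, by induction over the jobs.
  In any schedule, job \<open>k\<close> contributes \<open>b\<^sub>k (1 + a)\<^sup>e\<close>, where \<open>e\<close> is the number of later jobs on its
  machine; at most \<open>m\<close> jobs share a value of \<open>e\<close> and the \<open>b\<^sub>k\<close> increase, so by Abel summation
  the total load of the first \<open>P\<close> jobs is at least the round-robin value, and in an optimal schedule
  it is at most \<open>m OPT\<close>. Together: \<open>(m + a) \<mu> + b\<^sub>P \<le> m OPT\<close>, and with \<open>b\<^sub>P \<le> OPT\<close> the makespan
  \<open>(1 + a) \<mu> + b\<^sub>P\<close> is at most \<open>(2m + am - 1) / (m + a) OPT\<close>.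
\<close>

lemma sum_fun_upd_in:
  fixes f :: "'a \<Rightarrow> 'b::ab_group_add"
  assumes "finite A" "x \<in> A"
  shows "sum (f(x := y)) A = sum f A - f x + y"
proof -
  have "sum (f(x := y)) A = (f(x := y)) x + sum (f(x := y)) (A - {x})"
    using assms by (rule sum.remove)
  also have "sum (f(x := y)) (A - {x}) = sum f (A - {x})"
    by (rule sum.cong) auto
  finally show ?thesis
    using assms by (simp add: sum_diff1)
qed

lemma sum_power_div_le_of_fibres:
  fixes q :: real
  assumes "finite A" "\<And>v. card {x \<in> A. f x = v} \<le> m" "0 < m" "1 \<le> q"
  shows "(\<Sum>i<card A. q ^ (i div m)) \<le> (\<Sum>x\<in>A. q ^ f x)"
  using assms(1,2)
proof (induction "card A" arbitrary: A)
  case 0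
  then show ?case by simp
next
  case (Suc n)
  then have "Max (f ` A) \<in> f ` A" by (intro Max_in) auto
  then obtain x0 where "x0 \<in> A" "f x0 = Max (f ` A)" by auto
  then have x0: "x0 \<in> A" "\<forall>x\<in>A. f x \<le> f x0" using Suc.prems(1) by auto
  have "A = (\<Union>v\<le>f x0. {x \<in> A. f x = v})" using x0(2) by auto
  then have "card A \<le> (\<Sum>v\<le>f x0. card {x \<in> A. f x = v})"
    by (metis card_UN_le finite_atMost)
  also have "\<dots> \<le> Suc (f x0) * m"
    using sum_bounded_above[of "{..f x0}" "\<lambda>v. card {x \<in> A. f x = v}" m] Suc.prems(2) by simp
  finally have "n div m \<le> f x0"
    using Suc.hyps(2) less_mult_imp_div_less[of n "Suc (f x0)" m] by simp
  then have "q ^ (n div m) \<le> q ^ f x0" using assms(4) by (rule power_increasing)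
  moreover have "(\<Sum>i<card (A - {x0}). q ^ (i div m)) \<le> (\<Sum>x\<in>A - {x0}. q ^ f x)"
  proof (rule Suc.hyps(1))
    show "card {x \<in> A - {x0}. f x = v} \<le> m" for v
      using Suc.prems(1) by (intro le_trans[OF card_mono Suc.prems(2)[of v]]) auto
  qed (use Suc.hyps(2) Suc.prems(1) x0(1) in auto)
  moreover have "card (A - {x0}) = n" using Suc.hyps(2) Suc.prems(1) x0(1) by simp
  ultimately have "(\<Sum>i<Suc n. q ^ (i div m)) \<le> q ^ f x0 + (\<Sum>x\<in>A - {x0}. q ^ f x)"
    by simp
  then show ?case
    using Suc.hyps(2) Suc.prems(1) x0(1) by (simp add: sum.remove)
qed

lemma sum_mult_le_of_suffix_sums:
  fixes x y \<beta> :: "nat \<Rightarrow> real"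
  assumes "\<forall>t\<in>{t0..R}. sum y {t..R} \<le> sum x {t..R}"
    and "mono_on {t0..R} \<beta>" "\<forall>k\<in>{t0..R}. c \<le> \<beta> k"
  shows "(\<Sum>k=t0..R. (\<beta> k - c) * y k) \<le> (\<Sum>k=t0..R. (\<beta> k - c) * x k)"
  using assms
proof (induction "Suc R - t0" arbitrary: t0 c)
  case 0
  then show ?case by simp
next
  case (Suc d)
  then have t0: "t0 \<le> R" by simp
  have split: "(\<Sum>k=t0..R. (\<beta> k - c) * z k)
      = (\<beta> t0 - c) * sum z {t0..R} + (\<Sum>k=Suc t0..R. (\<beta> k - \<beta> t0) * z k)" for z
  proof -
    have "(\<Sum>k=t0..R. (\<beta> k - c) * z k) = (\<Sum>k=t0..R. (\<beta> t0 - c) * z k + (\<beta> k - \<beta> t0) * z k)"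
      by (rule sum.cong) (auto simp: algebra_simps)
    also have "\<dots> = (\<beta> t0 - c) * sum z {t0..R} + (\<Sum>k=Suc t0..R. (\<beta> k - \<beta> t0) * z k)"
      using t0 by (simp add: sum.distrib sum_distrib_left sum.atLeast_Suc_atMost distrib_left)
    finally show ?thesis .
  qed
  have "(\<Sum>k=Suc t0..R. (\<beta> k - \<beta> t0) * y k) \<le> (\<Sum>k=Suc t0..R. (\<beta> k - \<beta> t0) * x k)"
    using Suc by (intro Suc.hyps(1)) (auto elim!: mono_on_subset intro: mono_onD)
  moreover have "(\<beta> t0 - c) * sum y {t0..R} \<le> (\<beta> t0 - c) * sum x {t0..R}"
    using Suc.prems(1,3) t0 by (intro mult_left_mono) auto
  ultimately show ?case
    unfolding split by linarith
qed

text \<open>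
  Jobs are numbered \<open>1, 2, \<dots>\<close> in priority order and \<open>g r\<close> is the machine of job \<open>r\<close>; with
  \<open>q = 1 + a\<close>, \<open>machine_load q \<beta> g R j\<close> is the completion time of the last of the jobs \<open>1..R\<close> on \<open>j\<close>.
\<close>

primrec machine_load :: "real \<Rightarrow> (nat \<Rightarrow> real) \<Rightarrow> (nat \<Rightarrow> 'm) \<Rightarrow> nat \<Rightarrow> 'm \<Rightarrow> real" where
  "machine_load q \<beta> g 0 j = 0"
| "machine_load q \<beta> g (Suc r) j =
     (if g (Suc r) = j then q * machine_load q \<beta> g r j + \<beta> (Suc r) else machine_load q \<beta> g r j)"

lemma machine_load_nonneg:
  "0 \<le> q \<Longrightarrow> \<forall>r\<in>{1..R}. 0 \<le> \<beta> r \<Longrightarrow> 0 \<le> machine_load q \<beta> g R j"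
  by (induction R) auto

lemma machine_load_ge_last:
  assumes "0 \<le> q" "\<forall>r\<in>{1..R}. 0 \<le> \<beta> r" "1 \<le> R"
  shows "\<beta> R \<le> machine_load q \<beta> g R (g R)"
proof -
  obtain R' where R': "R = Suc R'" using assms(3) by (cases R) auto
  have "0 \<le> machine_load q \<beta> g R' (g R)"
    using assms(1,2) R' by (intro machine_load_nonneg) auto
  then show ?thesis using assms(1) R' by simp
qed

lemma machine_load_cong:
  "\<forall>r\<in>{1..R}. g r = g' r \<Longrightarrow> machine_load q \<beta> g R j = machine_load q \<beta> g' R j"
  by (induction R) auto

lemma machine_load_Suc_upd:
  "machine_load q \<beta> g (Suc R) =
     (machine_load q \<beta> g R)(g (Suc R) := q * machine_load q \<beta> g R (g (Suc R)) + \<beta> (Suc R))"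
  by auto

definition greedy_assignment :: "'m set \<Rightarrow> real \<Rightarrow> (nat \<Rightarrow> real) \<Rightarrow> (nat \<Rightarrow> 'm) \<Rightarrow> nat \<Rightarrow> bool" where
  "greedy_assignment M q \<beta> g R \<longleftrightarrow> (\<forall>r\<in>{1..R}. g r \<in> M \<and>
     (\<forall>j\<in>M. machine_load q \<beta> g (r - 1) (g r) \<le> machine_load q \<beta> g (r - 1) j))"

lemma greedy_assignment_le:
  "greedy_assignment M q \<beta> g R \<Longrightarrow> R' \<le> R \<Longrightarrow> greedy_assignment M q \<beta> g R'"
  unfolding greedy_assignment_def by auto

text \<open>
  The total load when jobs \<open>1..R\<close>, followed by \<open>s\<close> jobs with \<open>\<beta> = 0\<close>, are dealt to \<open>m\<close> machines
  cyclically: job \<open>k\<close> is then followed on its machine by \<open>(R + s - k) div m\<close> jobs.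
\<close>

definition round_robin_sum :: "real \<Rightarrow> (nat \<Rightarrow> real) \<Rightarrow> nat \<Rightarrow> nat \<Rightarrow> nat \<Rightarrow> real" where
  "round_robin_sum q \<beta> m s R = (\<Sum>k=1..R. \<beta> k * q ^ ((R + s - k) div m))"

lemma round_robin_sum_Suc:
  assumes "s < m"
  shows "round_robin_sum q \<beta> m s (Suc R) = round_robin_sum q \<beta> m (Suc s) R + \<beta> (Suc R)"
proof -
  have "round_robin_sum q \<beta> m s (Suc R) = (\<Sum>k=1..R. \<beta> k * q ^ ((Suc R + s - k) div m)) + \<beta> (Suc R)"
    using assms unfolding round_robin_sum_def by (simp add: sum.cl_ivl_Suc)
  also have "(\<Sum>k=1..R. \<beta> k * q ^ ((Suc R + s - k) div m)) = round_robin_sum q \<beta> m (Suc s) R"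
    unfolding round_robin_sum_def by (rule sum.cong) auto
  finally show ?thesis .
qed

lemma round_robin_sum_Suc_full:
  assumes "0 < m"
  shows "round_robin_sum q \<beta> m m (Suc R) = q * (round_robin_sum q \<beta> m 1 R + \<beta> (Suc R))"
proof -
  have "(Suc R + m - k) div m = Suc ((R + 1 - k) div m)" if "k \<le> R" for k
  proof -
    have "Suc R + m - k = (R + 1 - k) + m" using that by simp
    then show ?thesis using assms by (simp only: div_add_self2 neq0_conv Suc_eq_plus1)
  qed
  then have "(\<Sum>k=1..R. \<beta> k * q ^ ((Suc R + m - k) div m)) = q * round_robin_sum q \<beta> m 1 R"
    unfolding round_robin_sum_def sum_distrib_left by (intro sum.cong) auto
  then show ?thesis
    using assms unfolding round_robin_sum_def by (simp add: sum.cl_ivl_Suc algebra_simps)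
qed

lemma least_loaded_update_bound:
  fixes L :: "'m \<Rightarrow> real" and \<beta> :: real
  assumes "finite M" "c \<in> M" "\<forall>j\<in>M. L c \<le> L j" "S' \<subseteq> M" "card S' = Suc s" "0 \<le> a"
  defines "L' \<equiv> L(c := (1 + a) * L c + \<beta>)"
  shows "\<exists>S\<subseteq>M. card S = s \<and> sum L' M + a * sum L' S \<le> sum L M + a * sum L S' + \<beta>"
proof -
  have fin: "finite S'" using assms(1,4) finite_subset by blast
  obtain x where x: "x \<in> S'" "c \<in> S' \<Longrightarrow> x = c"
    using assms(5) by (metis card.empty ex_in_conv nat.distinct(1))
  define S where "S = S' - {x}"
  have "c \<notin> S" using x unfolding S_def by auto
  then have "sum L' S = sum L S" unfolding L'_def by (intro sum.cong) auto
  moreover have "sum L S' = L x + sum L S" unfolding S_def using fin x(1) by (rule sum.remove)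
  moreover have "sum L' M = sum L M - L c + ((1 + a) * L c + \<beta>)"
    unfolding L'_def using assms(1,2) by (rule sum_fun_upd_in)
  moreover have "a * L c \<le> a * L x" using assms(3,4,6) x(1) by (simp add: mult_left_mono subsetD)
  moreover have "S \<subseteq> M" "card S = s" unfolding S_def using assms(4,5) fin x(1) by auto
  ultimately show ?thesis by (intro exI[of _ S]) (auto simp: algebra_simps)
qed

lemma least_loaded_update_bound_full:
  fixes L :: "'m \<Rightarrow> real" and \<beta> :: real
  assumes "finite M" "c \<in> M" "\<forall>j\<in>M. L c \<le> L j" "x \<in> M" "0 \<le> a"
  defines "L' \<equiv> L(c := (1 + a) * L c + \<beta>)"
  shows "sum L' M + a * sum L' M \<le> (1 + a) * (sum L M + a * L x + \<beta>)"
proof -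
  have "sum L' M = sum L M - L c + ((1 + a) * L c + \<beta>)"
    unfolding L'_def using assms(1,2) by (rule sum_fun_upd_in)
  then have "sum L' M + a * sum L' M = (1 + a) * (sum L M + a * L c + \<beta>)"
    by (simp add: algebra_simps)
  also have "\<dots> \<le> (1 + a) * (sum L M + a * L x + \<beta>)"
    using assms(3-5) by (intro mult_left_mono) (auto intro: mult_left_mono)
  finally show ?thesis .
qed

text \<open>
  The left-hand side is the total load after \<open>s\<close> further jobs with \<open>\<beta> = 0\<close> are put on the \<open>s\<close>
  machines of \<open>S\<close>.
\<close>

lemma greedy_load_bound:
  assumes "finite M" "card M = m" "0 < m" "0 \<le> a"
    and "greedy_assignment M (1 + a) \<beta> g R" "s \<le> m"
  shows "\<exists>S\<subseteq>M. card S = s \<and>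
    (\<Sum>j\<in>M. machine_load (1 + a) \<beta> g R j) + a * (\<Sum>j\<in>S. machine_load (1 + a) \<beta> g R j)
      \<le> round_robin_sum (1 + a) \<beta> m s R"
  using assms(5,6)
proof (induction R arbitrary: s)
  case 0
  then obtain S where "S \<subseteq> M" "card S = s"
    using obtain_subset_with_card_n assms(2) by metis
  then show ?case by (auto simp: round_robin_sum_def)
next
  case (Suc R)
  let ?L = "machine_load (1 + a) \<beta> g R" and ?c = "g (Suc R)"
  have IH: "\<exists>S\<subseteq>M. card S = s' \<and> sum ?L M + a * sum ?L S \<le> round_robin_sum (1 + a) \<beta> m s' R"
    if "s' \<le> m" for s'
    using Suc.IH[OF greedy_assignment_le[OF Suc.prems(1)] that] by simp
  have c: "?c \<in> M" "\<forall>j\<in>M. ?L ?c \<le> ?L j"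
    using Suc.prems(1) unfolding greedy_assignment_def by (auto dest: bspec[of _ _ "Suc R"])
  note load_Suc = machine_load_Suc_upd[of "1 + a" \<beta> g R]
  show ?case
  proof (cases "s < m")
    case True
    then obtain S' where S': "S' \<subseteq> M" "card S' = Suc s"
        "sum ?L M + a * sum ?L S' \<le> round_robin_sum (1 + a) \<beta> m (Suc s) R"
      using IH[of "Suc s"] by auto
    then obtain S where "S \<subseteq> M" "card S = s" and
      "sum (machine_load (1 + a) \<beta> g (Suc R)) M + a * sum (machine_load (1 + a) \<beta> g (Suc R)) S
        \<le> sum ?L M + a * sum ?L S' + \<beta> (Suc R)"
      using least_loaded_update_bound[OF assms(1) c S'(1,2) assms(4)] unfolding load_Suc by blast
    with S'(3) show ?thesis
      using round_robin_sum_Suc[OF True] by (intro exI[of _ S]) auto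
  next
    case False
    then have "s = m" using Suc.prems(2) by simp
    obtain S1 where S1: "S1 \<subseteq> M" "card S1 = 1"
        "sum ?L M + a * sum ?L S1 \<le> round_robin_sum (1 + a) \<beta> m 1 R"
      using IH assms(3) by (metis One_nat_def Suc_leI)
    then obtain x where x: "S1 = {x}" "x \<in> M" by (metis card_1_singletonE insert_subset)
    have "sum (machine_load (1 + a) \<beta> g (Suc R)) M + a * sum (machine_load (1 + a) \<beta> g (Suc R)) M
        \<le> (1 + a) * (sum ?L M + a * ?L x + \<beta> (Suc R))"
      using least_loaded_update_bound_full[OF assms(1) c x(2) assms(4)] unfolding load_Suc .
    also have "\<dots> \<le> (1 + a) * (round_robin_sum (1 + a) \<beta> m 1 R + \<beta> (Suc R))"
      using S1(3) x(1) assms(4) by (intro mult_left_mono) auto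
    also have "\<dots> = round_robin_sum (1 + a) \<beta> m s (Suc R)"
      using round_robin_sum_Suc_full[OF assms(3)] \<open>s = m\<close> by simp
    finally show ?thesis
      using \<open>s = m\<close> assms(2) by (intro exI[of _ M]) auto
  qed
qed

definition later_count :: "(nat \<Rightarrow> 'm) \<Rightarrow> nat \<Rightarrow> nat \<Rightarrow> nat" where
  "later_count g R k = card {k' \<in> {Suc k..R}. g k' = g k}"

lemma later_count_Suc:
  assumes "k \<le> R"
  shows "later_count g (Suc R) k = later_count g R k + (if g (Suc R) = g k then 1 else 0)"
proof -
  have "{k' \<in> {Suc k..Suc R}. g k' = g k} =
      (if g (Suc R) = g k then insert (Suc R) else id) {k' \<in> {Suc k..R}. g k' = g k}"
    using assms by (auto simp: le_Suc_eq)
  then show ?thesis unfolding later_count_def by simp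
qed

lemma later_count_self [simp]: "later_count g R R = 0"
  by (simp add: later_count_def)

lemma machine_load_eq_sum:
  "machine_load q \<beta> g R j = (\<Sum>k \<in> {k \<in> {1..R}. g k = j}. \<beta> k * q ^ later_count g R k)"
proof (induction R)
  case 0
  then show ?case by simp
next
  case (Suc R)
  let ?A = "{k \<in> {1..R}. g k = j}"
  have later: "later_count g (Suc R) k = later_count g R k + (if g (Suc R) = j then 1 else 0)"
    if "k \<in> ?A" for k
    using that later_count_Suc[of k R g] by auto
  show ?case
  proof (cases "g (Suc R) = j")
    case True
    then have "{k \<in> {1..Suc R}. g k = j} = insert (Suc R) ?A" by (auto simp: le_Suc_eq)
    moreover have "(\<Sum>k\<in>?A. \<beta> k * q ^ later_count g (Suc R) k) = q * machine_load q \<beta> g R j"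
      using True later unfolding Suc.IH sum_distrib_left by (intro sum.cong) auto
    ultimately show ?thesis using True by simp
  next
    case False
    then have "{k \<in> {1..Suc R}. g k = j} = ?A" by (auto simp: le_Suc_eq)
    moreover have "(\<Sum>k\<in>?A. \<beta> k * q ^ later_count g (Suc R) k) = machine_load q \<beta> g R j"
      using False later unfolding Suc.IH by (intro sum.cong) auto
    ultimately show ?thesis using False by simp
  qed
qed

lemma sum_machine_load_eq:
  assumes "finite M" "\<forall>k\<in>{1..R}. g k \<in> M"
  shows "(\<Sum>j\<in>M. machine_load q \<beta> g R j) = (\<Sum>k=1..R. \<beta> k * q ^ later_count g R k)"
  unfolding machine_load_eq_sum using assms by (intro sum.group) auto

lemma later_count_less:
  assumes "k < k'" "k' \<le> R" "g k = g k'"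
  shows "later_count g R k' < later_count g R k"
  unfolding later_count_def
proof (rule psubset_card_mono)
  have "k' \<in> {k'' \<in> {Suc k..R}. g k'' = g k} - {k'' \<in> {Suc k'..R}. g k'' = g k'}"
    using assms by auto
  moreover have "{k'' \<in> {Suc k'..R}. g k'' = g k'} \<subseteq> {k'' \<in> {Suc k..R}. g k'' = g k}"
    using assms by auto
  ultimately show "{k'' \<in> {Suc k'..R}. g k'' = g k'} \<subset> {k'' \<in> {Suc k..R}. g k'' = g k}"
    by blast
qed simp

lemma card_later_count_fibre:
  assumes "finite M" "\<forall>k\<in>A. g k \<in> M" "A \<subseteq> {..R}"
  shows "card {k \<in> A. later_count g R k = v} \<le> card M"
proof (rule card_inj_on_le)
  show "inj_on g {k \<in> A. later_count g R k = v}"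
  proof (rule inj_onI, rule ccontr)
    fix x y
    assume "x \<in> {k \<in> A. later_count g R k = v}" "y \<in> {k \<in> A. later_count g R k = v}"
      and "g x = g y" "x \<noteq> y"
    then show False
      using later_count_less[of x y R g] later_count_less[of y x R g] assms(3)
      by (cases "x < y") auto
  qed
qed (use assms in auto)

lemma round_robin_le_sum_machine_load:
  fixes \<beta> :: "nat \<Rightarrow> real"
  assumes "finite M" "card M = m" "0 < m" "1 \<le> q"
    and "\<forall>k\<in>{1..R}. h k \<in> M" "mono_on {1..R} \<beta>" "\<forall>k\<in>{1..R}. 0 \<le> \<beta> k"
  shows "round_robin_sum q \<beta> m 0 R \<le> (\<Sum>j\<in>M. machine_load q \<beta> h R j)"
proof -
  have "\<forall>t\<in>{1..R}. (\<Sum>k=t..R. q ^ ((R - k) div m)) \<le> (\<Sum>k=t..R. q ^ later_count h R k)"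
  proof
    fix t assume t: "t \<in> {1..R}"
    have "(\<Sum>k=t..R. q ^ ((R - k) div m)) = (\<Sum>i<card {t..R}. q ^ (i div m))"
      by (rule sum.reindex_bij_witness[of _ "\<lambda>i. R - i" "\<lambda>k. R - k"]) (use t in auto)
    also have "\<dots> \<le> (\<Sum>k=t..R. q ^ later_count h R k)"
      using card_later_count_fibre[OF assms(1), of "{t..R}" h R] assms(2-5) t
      by (intro sum_power_div_le_of_fibres) auto
    finally show "(\<Sum>k=t..R. q ^ ((R - k) div m)) \<le> (\<Sum>k=t..R. q ^ later_count h R k)" .
  qed
  then have "(\<Sum>k=1..R. (\<beta> k - 0) * q ^ ((R - k) div m)) \<le> (\<Sum>k=1..R. (\<beta> k - 0) * q ^ later_count h R k)"
    using assms(6,7) by (rule sum_mult_le_of_suffix_sums)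
  then show ?thesis
    unfolding round_robin_sum_def sum_machine_load_eq[OF assms(1,5)] by simp
qed

lemma completion_le_ratio_of_load_bounds:
  fixes a m \<mu> \<beta> T :: real
  assumes "(m + a) * \<mu> + \<beta> \<le> m * T" "\<beta> \<le> T" "1 \<le> m" "0 \<le> a"
  shows "(1 + a) * \<mu> + \<beta> \<le> (2 * m + a * m - 1) / (m + a) * T"
proof -
  have "(1 + a) * ((m + a) * \<mu>) \<le> (1 + a) * (m * T - \<beta>)"
    using assms(1,4) by (intro mult_left_mono) auto
  moreover have "(m - 1) * \<beta> \<le> (m - 1) * T"
    using assms(2,3) by (intro mult_left_mono) auto
  ultimately have "(m + a) * ((1 + a) * \<mu> + \<beta>) \<le> (2 * m + a * m - 1) * T"
    by (simp add: algebra_simps)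
  then show ?thesis
    using assms(3,4) by (simp add: le_divide_eq mult.commute)
qed

lemma greedy_completion_time_bound:
  fixes \<beta> :: "nat \<Rightarrow> real"
  assumes "finite M" "card M = m" "0 < m" "0 \<le> a" "1 \<le> P"
    and "mono_on {1..P} \<beta>" "\<forall>k\<in>{1..P}. 0 \<le> \<beta> k"
    and "greedy_assignment M (1 + a) \<beta> g P"
    and "\<forall>k\<in>{1..P}. h k \<in> M" "\<forall>j\<in>M. machine_load (1 + a) \<beta> h P j \<le> T"
  shows "(1 + a) * machine_load (1 + a) \<beta> g (P - 1) (g P) + \<beta> P
    \<le> (2 * m + a * m - 1) / (m + a) * T"
proof (rule completion_le_ratio_of_load_bounds)
  let ?L = "machine_load (1 + a) \<beta> g (P - 1)"
  have P: "P = Suc (P - 1)" using assms(5) by simp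
  have least: "g P \<in> M" "\<forall>j\<in>M. ?L (g P) \<le> ?L j"
    using assms(5,8) unfolding greedy_assignment_def by auto
  obtain S where S: "S \<subseteq> M" "card S = 1" "sum ?L M + a * sum ?L S \<le> round_robin_sum (1 + a) \<beta> m 1 (P - 1)"
    using greedy_load_bound[OF assms(1-4) greedy_assignment_le[OF assms(8)], of "P - 1" 1] assms(3)
    by auto
  then obtain x where x: "S = {x}" "x \<in> M" by (metis card_1_singletonE insert_subset)
  have "real m * ?L (g P) \<le> sum ?L M"
    using sum_bounded_below[of M "?L (g P)" ?L] least(2) assms(2) by simp
  moreover have "a * ?L (g P) \<le> a * sum ?L S"
    using least(2) x assms(4) by (simp add: mult_left_mono)
  moreover have "round_robin_sum (1 + a) \<beta> m 0 P \<le> (\<Sum>j\<in>M. machine_load (1 + a) \<beta> h P j)"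
    using assms by (intro round_robin_le_sum_machine_load) auto
  moreover have "(\<Sum>j\<in>M. machine_load (1 + a) \<beta> h P j) \<le> real m * T"
    using sum_bounded_above[of M _ T] assms(2,10) by simp
  moreover have "round_robin_sum (1 + a) \<beta> m 0 P = round_robin_sum (1 + a) \<beta> m 1 (P - 1) + \<beta> P"
    using round_robin_sum_Suc[OF assms(3), of "1 + a" \<beta> "P - 1"] P by simp
  ultimately show "(real m + a) * ?L (g P) + \<beta> P \<le> real m * T"
    using S(3) by (simp add: algebra_simps)
  have "\<beta> P \<le> machine_load (1 + a) \<beta> h P (h P)"
    using assms(4,5,7) by (intro machine_load_ge_last) auto
  also have "\<dots> \<le> T" using assms(5,9,10) by auto
  finally show "\<beta> P \<le> T" .
  show "1 \<le> real m" "0 \<le> a" using assms(3,4) by auto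
qed

lemma foldl_linear_eq_machine_load:
  "foldl (\<lambda>t k. t + (b k + a * t)) 0 (map h (sorted_list_of_set {r \<in> {1..R}. g r = j}))
     = machine_load (1 + a) (b \<circ> h) g R j"
proof -
  have "sorted_list_of_set {r \<in> {1..R}. g r = j}
      = sorted_list_of_set (set (filter (\<lambda>r. g r = j) [1..<Suc R]))"
    by (rule arg_cong[where f = sorted_list_of_set]) auto
  also have "\<dots> = filter (\<lambda>r. g r = j) [1..<Suc R]"
    by (intro sorted_list_of_set.idem_if_sorted_distinct sorted_wrt_filter) (simp_all del: upt_Suc)
  moreover have "foldl (\<lambda>t k. t + (b k + a * t)) 0 (map h (filter (\<lambda>r. g r = j) [1..<Suc R]))
      = machine_load (1 + a) (b \<circ> h) g R j"
    by (induction R) (auto simp: algebra_simps)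
  ultimately show ?thesis by simp
qed

lemma inv_into_priority:
  assumes "bij_betw pr N {1..card N}" "r \<in> {1..card N}"
  shows "inv_into N pr r \<in> N" "pr (inv_into N pr r) = r"
  using assms by (auto simp: bij_betw_def intro: inv_into_into f_inv_into_f)

lemma compl_time_eq_machine_load:
  assumes "bij_betw pr N {1..card N}" "i \<in> N"
  shows "compl_time N pr (\<lambda>_. 1) (\<lambda>i t. b i + a * t) \<sigma> i
    = (1 + a) * machine_load (1 + a) (b \<circ> inv_into N pr) (\<sigma> \<circ> inv_into N pr) (pr i - 1) (\<sigma> i)
      + b i"
proof -
  have "pr ` pred_jobs N pr \<sigma> i = {r \<in> {1..pr i - 1}. (\<sigma> \<circ> inv_into N pr) r = \<sigma> i}"
  proof (intro equalityI subsetI)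
    fix r assume "r \<in> pr ` pred_jobs N pr \<sigma> i"
    then obtain k where "k \<in> N" "\<sigma> k = \<sigma> i" "pr k < pr i" "r = pr k"
      unfolding pred_jobs_def by auto
    then show "r \<in> {r \<in> {1..pr i - 1}. (\<sigma> \<circ> inv_into N pr) r = \<sigma> i}"
      using assms(1) by (auto simp: bij_betw_def)
  next
    fix r assume r: "r \<in> {r \<in> {1..pr i - 1}. (\<sigma> \<circ> inv_into N pr) r = \<sigma> i}"
    then have "r \<in> {1..card N}" using bij_betw_apply[OF assms] by auto
    then have "inv_into N pr r \<in> pred_jobs N pr \<sigma> i"
      using r inv_into_priority[OF assms(1)] unfolding pred_jobs_def by auto
    then show "r \<in> pr ` pred_jobs N pr \<sigma> i"
      using inv_into_priority(2)[OF assms(1) \<open>r \<in> {1..card N}\<close>] by (metis image_eqI)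
  qed
  then have "start_time N pr (\<lambda>_. 1) (\<lambda>i t. b i + a * t) \<sigma> i
      = machine_load (1 + a) (b \<circ> inv_into N pr) (\<sigma> \<circ> inv_into N pr) (pr i - 1) (\<sigma> i)"
    unfolding start_time_def by (simp only: div_by_1 foldl_linear_eq_machine_load)
  then show ?thesis
    unfolding compl_time_def by (simp add: algebra_simps)
qed

lemma mono_on_SBPT:
  assumes "SBPT N b pr"
  shows "mono_on {1..card N} (b \<circ> inv_into N pr)"
proof (rule mono_onI)
  fix r s assume rs: "r \<in> {1..card N}" "s \<in> {1..card N}" "r \<le> s"
  have "bij_betw pr N {1..card N}" using assms unfolding SBPT_def by blast
  note inv = inv_into_priority[OF this rs(1)] inv_into_priority[OF this rs(2)]
  then show "(b \<circ> inv_into N pr) r \<le> (b \<circ> inv_into N pr) s"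
    using assms rs(3) unfolding SBPT_def by (cases "r = s") auto
qed

text \<open>
  A deviation of job \<open>i\<close> leaves the jobs of higher priority in place, so on any machine \<open>j\<close> the job
  would complete at \<open>(1 + a)\<close> times the load of \<open>j\<close> before it, plus \<open>b i\<close>.
\<close>

lemma greedy_assignment_if_is_NE:
  assumes bij: "bij_betw pr N {1..card N}" and "0 \<le> a"
    and NE: "is_NE N M pr (\<lambda>_. 1) (\<lambda>i t. b i + a * t) sig"
  shows "greedy_assignment M (1 + a) (b \<circ> inv_into N pr) (sig \<circ> inv_into N pr) (card N)"
  unfolding greedy_assignment_def
proof (intro ballI conjI)
  let ?\<pi> = "inv_into N pr" and ?L = "machine_load (1 + a) (b \<circ> inv_into N pr)"
  fix r assume r: "r \<in> {1..card N}"
  define i where "i = ?\<pi> r"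
  have i: "i \<in> N" "pr i = r"
    unfolding i_def using inv_into_priority[OF bij r] by auto
  then show "(sig \<circ> ?\<pi>) r \<in> M"
    using NE unfolding is_NE_def i_def by auto
  fix j assume "j \<in> M"
  have "?L ((sig(i := j)) \<circ> ?\<pi>) (r - 1) j = ?L (sig \<circ> ?\<pi>) (r - 1) j"
  proof (rule machine_load_cong, intro ballI)
    fix r' assume "r' \<in> {1..r - 1}"
    then have "pr (?\<pi> r') = r'"
      using r by (intro inv_into_priority(2)[OF bij]) auto
    with i \<open>r' \<in> {1..r - 1}\<close> show "((sig(i := j)) \<circ> ?\<pi>) r' = (sig \<circ> ?\<pi>) r'" by auto
  qed
  moreover have "compl_time N pr (\<lambda>_. 1) (\<lambda>i t. b i + a * t) sig i
      \<le> compl_time N pr (\<lambda>_. 1) (\<lambda>i t. b i + a * t) (sig(i := j)) i"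
    using NE \<open>j \<in> M\<close> i(1) unfolding is_NE_def by blast
  ultimately have "(1 + a) * ?L (sig \<circ> ?\<pi>) (r - 1) (sig i) \<le> (1 + a) * ?L (sig \<circ> ?\<pi>) (r - 1) j"
    unfolding compl_time_eq_machine_load[OF bij i(1)] i(2) by simp
  then show "?L (sig \<circ> ?\<pi>) (r - 1) ((sig \<circ> ?\<pi>) r) \<le> ?L (sig \<circ> ?\<pi>) (r - 1) j"
    using \<open>0 \<le> a\<close> unfolding i_def by simp
qed

lemma compl_time_le_makespan:
  "finite N \<Longrightarrow> i \<in> N \<Longrightarrow> compl_time N pr s p \<sigma> i \<le> makespan N pr s p \<sigma>"
  unfolding makespan_def by simp

lemma makespan_attained:
  assumes "finite N" "N \<noteq> {}"
  obtains i where "i \<in> N" "makespan N pr s p \<sigma> = compl_time N pr s p \<sigma> i"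
proof -
  have "makespan N pr s p \<sigma> \<in> compl_time N pr s p \<sigma> ` N"
    unfolding makespan_def using assms by (intro Max_in) auto
  then show ?thesis using that by blast
qed

lemma OPT_attained:
  assumes "finite N" "finite M" "M \<noteq> {}"
  obtains \<sigma> where "\<sigma> \<in> N \<rightarrow>\<^sub>E M" "OPT N M pr s p = makespan N pr s p \<sigma>"
proof -
  have "OPT N M pr s p \<in> makespan N pr s p ` (N \<rightarrow>\<^sub>E M)"
    unfolding OPT_def using assms by (intro Min_in) (auto simp: finite_PiE PiE_eq_empty_iff)
  then show ?thesis using that by blast
qed

lemma machine_load_le_makespan:
  assumes "finite N" "N \<noteq> {}" "bij_betw pr N {1..card N}" "0 \<le> a" "\<forall>i\<in>N. 0 \<le> b i"
    and "R \<le> card N"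
  shows "machine_load (1 + a) (b \<circ> inv_into N pr) (\<sigma> \<circ> inv_into N pr) R j
    \<le> makespan N pr (\<lambda>_. 1) (\<lambda>i t. b i + a * t) \<sigma>"
  using assms(6)
proof (induction R)
  case 0
  define i where "i = inv_into N pr 1"
  have "1 \<in> {1..card N}" using assms(1,2) by (simp add: Suc_leI card_gt_0_iff)
  then have "i \<in> N" "pr i = 1"
    unfolding i_def using inv_into_priority[OF assms(3)] by auto
  then have "0 \<le> compl_time N pr (\<lambda>_. 1) (\<lambda>i t. b i + a * t) \<sigma> i"
    using assms(5) by (simp add: compl_time_eq_machine_load[OF assms(3)])
  also have "\<dots> \<le> makespan N pr (\<lambda>_. 1) (\<lambda>i t. b i + a * t) \<sigma>"
    using assms(1) \<open>i \<in> N\<close> by (rule compl_time_le_makespan)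
  finally show ?case by simp
next
  case (Suc R)
  define k where "k = inv_into N pr (Suc R)"
  have k: "k \<in> N" "pr k = Suc R"
    unfolding k_def using inv_into_priority[OF assms(3)] Suc.prems by auto
  show ?case
  proof (cases "(\<sigma> \<circ> inv_into N pr) (Suc R) = j")
    case True
    then have "machine_load (1 + a) (b \<circ> inv_into N pr) (\<sigma> \<circ> inv_into N pr) (Suc R) j
        = compl_time N pr (\<lambda>_. 1) (\<lambda>i t. b i + a * t) \<sigma> k"
      using k by (simp add: compl_time_eq_machine_load[OF assms(3)] k_def)
    also have "\<dots> \<le> makespan N pr (\<lambda>_. 1) (\<lambda>i t. b i + a * t) \<sigma>"
      using assms(1) k(1) by (rule compl_time_le_makespan)
    finally show ?thesis .
  next
    case False
    then show ?thesis using Suc by simp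
  qed
qed

theorem theorem20:
  fixes N :: "'j set" and M :: "'m set" and b :: "'j \<Rightarrow> real" and a :: real
    and pr :: "'j \<Rightarrow> nat" and sig :: "'j \<Rightarrow> 'm"
  assumes "finite N" "N \<noteq> {}" "finite M" "M \<noteq> {}"
    and "a > 0" "\<forall>i\<in>N. b i \<ge> 0"
    and "SBPT N b pr"
    and "is_NE N M pr (\<lambda>_. 1) (\<lambda>i t. b i + a * t) sig"
  shows "makespan N pr (\<lambda>_. 1) (\<lambda>i t. b i + a * t) sig
     \<le> (2 * real (card M) + a * real (card M) - 1) / (real (card M) + a)
        * OPT N M pr (\<lambda>_. 1) (\<lambda>i t. b i + a * t)"
proof -
  let ?p = "\<lambda>i t. b i + a * t" and ?\<pi> = "inv_into N pr"
  have bij: "bij_betw pr N {1..card N}" using assms(7) unfolding SBPT_def by blast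
  obtain i where i: "i \<in> N" "makespan N pr (\<lambda>_. 1) ?p sig = compl_time N pr (\<lambda>_. 1) ?p sig i"
    using makespan_attained assms(1,2) by blast
  obtain \<sigma> where \<sigma>: "\<sigma> \<in> N \<rightarrow>\<^sub>E M" "OPT N M pr (\<lambda>_. 1) ?p = makespan N pr (\<lambda>_. 1) ?p \<sigma>"
    using OPT_attained assms(1,3,4) by blast
  have P: "pr i \<in> {1..card N}" "?\<pi> (pr i) = i"
    using bij_betw_apply[OF bij i(1)] inv_into_f_f[OF bij_betw_imp_inj_on[OF bij] i(1)] by auto
  have "makespan N pr (\<lambda>_. 1) ?p sig = (1 + a) *
      machine_load (1 + a) (b \<circ> ?\<pi>) (sig \<circ> ?\<pi>) (pr i - 1) ((sig \<circ> ?\<pi>) (pr i)) + (b \<circ> ?\<pi>) (pr i)"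
    using i compl_time_eq_machine_load[OF bij i(1)] P(2) by simp
  also have "\<dots> \<le> (2 * real (card M) + a * real (card M) - 1) / (real (card M) + a)
      * OPT N M pr (\<lambda>_. 1) ?p"
  proof (rule greedy_completion_time_bound)
    show "greedy_assignment M (1 + a) (b \<circ> ?\<pi>) (sig \<circ> ?\<pi>) (pr i)"
      using greedy_assignment_if_is_NE[OF bij _ assms(8)] assms(5) P(1)
      by (auto intro: greedy_assignment_le)
    show "mono_on {1..pr i} (b \<circ> ?\<pi>)"
      using mono_on_subset[OF mono_on_SBPT[OF assms(7)]] P(1) by auto
    show "\<forall>k\<in>{1..pr i}. 0 \<le> (b \<circ> ?\<pi>) k" "\<forall>k\<in>{1..pr i}. (\<sigma> \<circ> ?\<pi>) k \<in> M"
      using inv_into_priority(1)[OF bij] P(1) assms(6) \<sigma>(1) by (auto simp: PiE_iff)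
    show "\<forall>j\<in>M. machine_load (1 + a) (b \<circ> ?\<pi>) (\<sigma> \<circ> ?\<pi>) (pr i) j \<le> OPT N M pr (\<lambda>_. 1) ?p"
      unfolding \<sigma>(2) using assms(1,2,5,6) bij P(1) by (auto intro: machine_load_le_makespan)
  qed (use assms(3-5) P(1) in \<open>auto simp: card_gt_0_iff\<close>)
  finally show ?thesis .
qed

end
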